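(* Let $n\ge1$. As polynomials in the indeterminates $x$ and $y$ with coefficients in $\mathbb{Q}[\mathfrak{S}_n]$, \begin{align*} \rho(x)\rho^{(\ell)}(y)=\rho^{(\ell)}(y)\rho(x)&=\rho(xy),\\ \overline{\rho}(x)\rho^{(\ell)}(y)=\rho^{(\ell)}(y)\overline{\rho}(x)&=\overline{\rho}(xy),\\ \rho(x)\rho^{(r)}(y)=\rho^{(r)}(y)\overline{\rho}(x)&=\rho(xy),\\ \overline{\rho}(x)\rho^{(r)}(y)=\rho^{(r)}(y)\rho(x)&=\overline{\rho}(xy), \end{align*} where $\rho(x)=\sum_{\pi}\Omega'(\pi;x/2)\pi$, $\overline{\rho}(x)=\sum_\pi\overline{\Omega}'(\pi;x/2)\pi$, $\rho^{(\ell)}(x)=\sum_\pi\Omega^{(\ell)}(\pi;(x-1)/2)\pi$, $\rho^{(r)}(x)=\sum_\pi\Omega^{(r)}(\pi;(x-1)/2)\pi$, all sums over $\pi\in\mathfrak{S}_n$.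
   Context: $\mathfrak{S}_n$ is the symmetric group on $[n]$, permutations are words $(\pi(1),\dots,\pi(n))$, and multiplication in $\mathbb{Q}[\mathfrak{S}_n]$ is composition. Let $Z$ be a finite totally ordered set each of whose elements is declared "plus-type" or "minus-type". For $\pi\in\mathfrak{S}_n$ let $N(\pi;Z)$ be the number of sequences $(a_1,\dots,a_n)\in Z^n$ with $a_1\le\dots\le a_n$ such that for every $s\in[n-1]$: if $\pi(s)<\pi(s+1)$ then $a_s<a_{s+1}$ or ($a_s=a_{s+1}$ is plus-type); if $\pi(s)>\pi(s+1)$ then $a_s<a_{s+1}$ or ($a_s=a_{s+1}$ is minus-type). For a positive integer $k$ define: $\Omega'(\pi;k)=N(\pi;\{\bar1<1<\dots<\bar k<k\})$; $\overline{\Omega}'(\pi;k)=N(\pi;\{0<\bar1<1<\dots<\overline{k-1}<k-1<\bar k\})$; $\Omega^{(\ell)}(\pi;k)=N(\pi;\{0<\bar1<1<\dots<\bar k<k\})$; $\Omega^{(r)}(\pi;k)=N(\pi;\{\bar1<1<\dots<\bar k<k<\overline{k+1}\})$. Here $0$ and unbarred $j$ are plus-type, barred $\bar j$ are minus-type. Each is, as a function of $k$, the restriction of a unique polynomial with rational coefficients, denoted by the same symbol. *)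

theory Defs
  imports Main "HOL-Library.FuncSet" "HOL-Computational_Algebra.Polynomial"
    "HOL-Combinatorics.Permutations"
begin

(* A totally ordered typed set Z is a list of booleans, ordered by position;
   True = plus-type, False = minus-type. *)
definition Ncount :: "nat \<Rightarrow> (nat \<Rightarrow> nat) \<Rightarrow> bool list \<Rightarrow> nat" where
  "Ncount n \<pi> Z = card {a \<in> {1..n} \<rightarrow>\<^sub>E {..<length Z}.
      (\<forall>s\<in>{1..<n}. a s \<le> a (Suc s)) \<and>
      (\<forall>s\<in>{1..<n}. \<pi> s < \<pi> (Suc s) \<longrightarrow>
          a s < a (Suc s) \<or> (a s = a (Suc s) \<and> Z ! (a s))) \<and>
      (\<forall>s\<in>{1..<n}. \<pi> s > \<pi> (Suc s) \<longrightarrow>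
          a s < a (Suc s) \<or> (a s = a (Suc s) \<and> \<not> Z ! (a s)))}"

definition Zpairs :: "nat \<Rightarrow> bool list" where
  "Zpairs k = concat (replicate k [False, True])"

(* Omega' : {bar1<1<...<bar k<k} *)
definition Z_prime :: "nat \<Rightarrow> bool list" where "Z_prime k = Zpairs k"
(* Omega-bar' : {0<bar1<1<...<bar(k-1)<k-1<bar k} *)
definition Z_bar :: "nat \<Rightarrow> bool list" where "Z_bar k = True # Zpairs (k - 1) @ [False]"
(* Omega^(l) : {0<bar1<1<...<bar k<k} *)
definition Z_left :: "nat \<Rightarrow> bool list" where "Z_left k = True # Zpairs k"
(* Omega^(r) : {bar1<1<...<bar k<k<bar(k+1)} *)
definition Z_right :: "nat \<Rightarrow> bool list" where "Z_right k = Zpairs k @ [False]"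

definition omega_poly :: "nat \<Rightarrow> (nat \<Rightarrow> bool list) \<Rightarrow> (nat \<Rightarrow> nat) \<Rightarrow> rat poly" where
  "omega_poly n Zf \<pi> = (THE p. \<forall>k::nat. k \<ge> 1 \<longrightarrow> poly p (of_nat k) = of_nat (Ncount n \<pi> (Zf k)))"

(* bivariate polynomials Q[x,y] as rat poly poly: inner variable x, outer variable y *)
definition Xv :: "rat poly poly" where "Xv = [:[:0, 1:]:]"
definition Yv :: "rat poly poly" where "Yv = [:0, 1:]"
definition cst :: "rat \<Rightarrow> rat poly poly" where "cst c = [:[:c:]:]"

definition subst :: "rat poly \<Rightarrow> rat poly poly \<Rightarrow> rat poly poly" where
  "subst p t = poly (map_poly cst p) t"

(* elements of Q[S_n][x,y] = Q[x,y][S_n]: functions on permutations of {1..n} *)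
definition galg_mult :: "nat \<Rightarrow> ((nat \<Rightarrow> nat) \<Rightarrow> 'r::comm_ring_1)
     \<Rightarrow> ((nat \<Rightarrow> nat) \<Rightarrow> 'r) \<Rightarrow> (nat \<Rightarrow> nat) \<Rightarrow> 'r" where
  "galg_mult n a b \<sigma> = (\<Sum>\<tau>\<in>{p. p permutes {1..n}}. \<Sum>\<upsilon>\<in>{p. p permutes {1..n}}.
       if \<tau> \<circ> \<upsilon> = \<sigma> then a \<tau> * b \<upsilon> else 0)"

definition gen_series :: "nat \<Rightarrow> (nat \<Rightarrow> bool list) \<Rightarrow> rat poly poly
     \<Rightarrow> (nat \<Rightarrow> nat) \<Rightarrow> rat poly poly" where
  "gen_series n Zf t = (\<lambda>\<pi>. if \<pi> permutes {1..n} then subst (omega_poly n Zf \<pi>) t else 0)"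

definition rho :: "nat \<Rightarrow> rat poly poly \<Rightarrow> (nat \<Rightarrow> nat) \<Rightarrow> rat poly poly" where
  "rho n t = gen_series n Z_prime (cst (1/2) * t)"
definition rho_bar :: "nat \<Rightarrow> rat poly poly \<Rightarrow> (nat \<Rightarrow> nat) \<Rightarrow> rat poly poly" where
  "rho_bar n t = gen_series n Z_bar (cst (1/2) * t)"
definition rho_l :: "nat \<Rightarrow> rat poly poly \<Rightarrow> (nat \<Rightarrow> nat) \<Rightarrow> rat poly poly" where
  "rho_l n t = gen_series n Z_left (cst (1/2) * (t - 1))"
definition rho_r :: "nat \<Rightarrow> rat poly poly \<Rightarrow> (nat \<Rightarrow> nat) \<Rightarrow> rat poly poly" where
  "rho_r n t = gen_series n Z_right (cst (1/2) * (t - 1))"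

end

theory Submission
  imports Defs
begin

(* A colouring g of the positions 1..n by a typed chain Z has a unique standardization std g:
   the permutation listing the positions by colour, upwards within plus-type colours and
   downwards within minus-type ones. The sequences compatible with pi are exactly the colourings
   with standardization pi, read along pi, so N(pi; Z) counts these colourings.
   For chains X and Y there is a product chain X (x) Y (Y with each element replaced by a copy
   of X, reversed under minus-type elements) and a bijection (g, h) -> G between pairs of
   colourings and colourings by X (x) Y with std G = std g o std h. Hence the counting series
   multiply in Q[S_n] as the chains multiply. The four chain families are alternating chains,
   and alternating chains of lengths L and M multiply to an alternating chain of length L M,
   so the identities hold at all points x = 2k, y = 2m + 1; this grid determines polynomials
   in x and y. *)

section \<open>Standardization of colourings\<close>

definition colourings :: "nat \<Rightarrow> nat \<Rightarrow> (nat \<Rightarrow> nat) set" where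
  "colourings n L = {1..n} \<rightarrow>\<^sub>E {..<L}"

lemma finite_colourings [simp]: "finite (colourings n L)"
  by (simp add: colourings_def finite_PiE)

lemma colourings_less: "g \<in> colourings n L \<Longrightarrow> i \<in> {1..n} \<Longrightarrow> g i < L"
  unfolding colourings_def by auto

lemma colourings_undefined: "g \<in> colourings n L \<Longrightarrow> i \<notin> {1..n} \<Longrightarrow> g i = undefined"
  unfolding colourings_def by (auto simp: PiE_def extensional_def)

lemma colouringsI:
  "(\<And>i. i \<in> {1..n} \<Longrightarrow> g i < L) \<Longrightarrow> (\<And>i. i \<notin> {1..n} \<Longrightarrow> g i = undefined) \<Longrightarrow>
   g \<in> colourings n L"
  unfolding colourings_def by (auto simp: PiE_def extensional_def)

lemma comp_permutes_in_colourings: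
  assumes "g \<in> colourings n L" "\<pi> permutes {1..n}"
  shows "g \<circ> \<pi> \<in> colourings n L"
proof (rule colouringsI)
  fix i assume "i \<in> {1..n}"
  then have "\<pi> i \<in> {1..n}" using permutes_in_image[OF assms(2)] by simp
  then show "(g \<circ> \<pi>) i < L" using colourings_less[OF assms(1)] by simp
qed (use assms in \<open>simp add: colourings_undefined permutes_not_in\<close>)

lemma bij_betw_comp_permutes_colourings:
  assumes "\<pi> permutes {1..n}"
  shows "bij_betw (\<lambda>g. g \<circ> \<pi>) (colourings n L) (colourings n L)"
proof (rule bij_betw_byWitness[where f' = "\<lambda>g. g \<circ> inv \<pi>"])
  show "(\<lambda>g. g \<circ> \<pi>) ` colourings n L \<subseteq> colourings n L"
    "(\<lambda>g. g \<circ> inv \<pi>) ` colourings n L \<subseteq> colourings n L"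
    using comp_permutes_in_colourings assms permutes_inv by blast+
qed (auto simp: comp_assoc permutes_inv_o[OF assms])

definition compatible_step :: "bool list \<Rightarrow> nat \<Rightarrow> nat \<Rightarrow> nat \<Rightarrow> nat \<Rightarrow> bool" where
  "compatible_step Z x y u v \<longleftrightarrow> u \<le> v \<and>
     (x < y \<longrightarrow> u < v \<or> (u = v \<and> Z ! u)) \<and> (y < x \<longrightarrow> u < v \<or> (u = v \<and> \<not> Z ! u))"

definition compatible :: "nat \<Rightarrow> (nat \<Rightarrow> nat) \<Rightarrow> bool list \<Rightarrow> (nat \<Rightarrow> nat) \<Rightarrow> bool" where
  "compatible n \<pi> Z a \<longleftrightarrow>
     (\<forall>s\<in>{1..<n}. compatible_step Z (\<pi> s) (\<pi> (Suc s)) (a s) (a (Suc s)))"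

definition compatible_colourings :: "nat \<Rightarrow> (nat \<Rightarrow> nat) \<Rightarrow> bool list \<Rightarrow> (nat \<Rightarrow> nat) set" where
  "compatible_colourings n \<pi> Z = {a \<in> colourings n (length Z). compatible n \<pi> Z a}"

lemma Ncount_eq_card_compatible: "Ncount n \<pi> Z = card (compatible_colourings n \<pi> Z)"
  unfolding Ncount_def compatible_colourings_def colourings_def compatible_def compatible_step_def
  by (simp add: ball_conj_distrib)

definition sorts :: "nat \<Rightarrow> (nat \<Rightarrow> 'a::linorder) \<Rightarrow> (nat \<Rightarrow> nat) \<Rightarrow> bool" where
  "sorts n f \<pi> \<longleftrightarrow> \<pi> permutes {1..n} \<and> (\<forall>s\<in>{1..<n}. f (\<pi> s) < f (\<pi> (Suc s)))"

lemma less_of_adjacent_less: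
  fixes f :: "nat \<Rightarrow> 'a::order"
  assumes "\<forall>s\<in>{1..<n}. f s < f (Suc s)" "1 \<le> i" "i < j" "j \<le> n"
  shows "f i < f j"
  using assms(3,4)
proof (induction j rule: less_induct)
  case (less j)
  show ?case
  proof (cases "j = Suc i")
    case False
    then obtain m where m: "j = Suc m" "i < m" using less.prems by (cases j) auto
    then have "f i < f m" using less by auto
    also have "f m < f (Suc m)" using assms(1,2) m less.prems by auto
    finally show ?thesis using m by simp
  qed (use assms less.prems in auto)
qed

lemma sorts_map_eq_sorted_list_of_set:
  assumes inj: "inj_on f {1..n}" and "sorts n f \<pi>"
  shows "map (f \<circ> \<pi>) [1..<Suc n] = sorted_list_of_set (f ` {1..n})"
proof -
  have \<pi>: "\<pi> permutes {1..n}" and adj: "\<forall>s\<in>{1..<n}. (f \<circ> \<pi>) s < (f \<circ> \<pi>) (Suc s)"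
    using assms(2) by (auto simp: sorts_def)
  have "sorted_wrt (<) (map (f \<circ> \<pi>) [1..<Suc n])"
    unfolding sorted_wrt_iff_nth_less using less_of_adjacent_less[OF adj]
    by (auto simp del: upt_Suc)
  moreover have "set (map (f \<circ> \<pi>) [1..<Suc n]) = f ` {1..n}"
    by (simp only: set_map set_upt atLeastLessThanSuc_atLeastAtMost image_comp[symmetric]
        permutes_image[OF \<pi>])
  moreover have "length (map (f \<circ> \<pi>) [1..<Suc n]) = card (f ` {1..n})"
    using card_image[OF inj] by simp
  ultimately have "sorted_list_of_set (f ` {1..n}) = map (f \<circ> \<pi>) [1..<Suc n]"
    by (intro sorted_list_of_set_unique[THEN iffD1]) auto
  then show ?thesis ..
qed

lemma sorts_unique:
  assumes inj: "inj_on f {1..n}" and "sorts n f \<pi>\<^sub>1" "sorts n f \<pi>\<^sub>2"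
  shows "\<pi>\<^sub>1 = \<pi>\<^sub>2"
proof
  fix s
  have \<pi>: "\<pi>\<^sub>1 permutes {1..n}" "\<pi>\<^sub>2 permutes {1..n}" using assms(2,3) by (auto simp: sorts_def)
  show "\<pi>\<^sub>1 s = \<pi>\<^sub>2 s"
  proof (cases "s \<in> {1..n}")
    case True
    have "map (f \<circ> \<pi>\<^sub>1) [1..<Suc n] ! (s - 1) = map (f \<circ> \<pi>\<^sub>2) [1..<Suc n] ! (s - 1)"
      using sorts_map_eq_sorted_list_of_set[OF inj] assms(2,3) by simp
    moreover have "s - 1 < length [1..<Suc n]" "[1..<Suc n] ! (s - 1) = s"
      using True by (auto simp del: upt_Suc)
    ultimately have "f (\<pi>\<^sub>1 s) = f (\<pi>\<^sub>2 s)" by (metis comp_apply nth_map)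
    then show ?thesis
      using inj True permutes_in_image[OF \<pi>(1)] permutes_in_image[OF \<pi>(2)] by (auto dest: inj_onD)
  qed (simp add: permutes_not_in[OF \<pi>(1)] permutes_not_in[OF \<pi>(2)])
qed

lemma sorts_exists:
  assumes inj: "inj_on f {1..n}"
  shows "\<exists>\<pi>. sorts n f \<pi>"
proof -
  define ks where "ks = sorted_list_of_set (f ` {1..n})"
  have ks: "sorted_wrt (<) ks" "set ks = f ` {1..n}" "length ks = n"
    using card_image[OF inj] by (simp_all add: ks_def)
  define \<pi> where "\<pi> s = (if s \<in> {1..n} then inv_into {1..n} f (ks ! (s - 1)) else s)" for s
  have "bij_betw (\<lambda>s. s - 1) {1..n} {..<n}"
    by (rule bij_betw_byWitness[where f' = Suc]) auto
  moreover have "bij_betw ((!) ks) {..<n} (f ` {1..n})"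
    using bij_betw_nth[of ks] ks by (simp add: strict_sorted_iff)
  moreover have "bij_betw (inv_into {1..n} f) (f ` {1..n}) {1..n}"
    by (rule bij_betw_inv_into) (rule bij_betw_imageI[OF inj refl])
  ultimately have "bij_betw (inv_into {1..n} f \<circ> (!) ks \<circ> (\<lambda>s. s - 1)) {1..n} {1..n}"
    by (metis bij_betw_trans)
  moreover have "bij_betw \<pi> {1..n} {1..n} \<longleftrightarrow>
      bij_betw (inv_into {1..n} f \<circ> (!) ks \<circ> (\<lambda>s. s - 1)) {1..n} {1..n}"
    by (rule bij_betw_cong) (simp add: \<pi>_def)
  ultimately have "bij_betw \<pi> {1..n} {1..n}" by simp
  then have perm: "\<pi> permutes {1..n}"
    by (rule bij_imp_permutes) (auto simp: \<pi>_def)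
  have "f (\<pi> s) = ks ! (s - 1)" if "s \<in> {1..n}" for s
    using that ks(2,3) nth_mem[of "s - 1" ks] by (auto simp: \<pi>_def f_inv_into_f)
  then have "\<forall>s\<in>{1..<n}. f (\<pi> s) < f (\<pi> (Suc s))"
    using ks(1,3) by (auto simp: sorted_wrt_iff_nth_less)
  with perm show ?thesis unfolding sorts_def by blast
qed

lemma mixed_radix_less_iff:
  fixes x y a b M :: nat
  assumes "a < M" "b < M"
  shows "x * M + a < y * M + b \<longleftrightarrow> x < y \<or> (x = y \<and> a < b)"
proof -
  have "x * M + a < y * M + b" if "x < y" "a < M" for x y a b
  proof -
    have "x * M + a < Suc x * M" using that by simp
    also have "\<dots> \<le> y * M" using that by (intro mult_le_mono1) simp
    finally show ?thesis by simp
  qed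
  from this[of x y a b] this[of y x b a] assms show ?thesis
    by (cases x y rule: linorder_cases) auto
qed


(* Positions are ordered by colour first, then upwards for a plus-type colour and downwards
   for a minus-type one. *)
definition std_key :: "nat \<Rightarrow> bool list \<Rightarrow> (nat \<Rightarrow> nat) \<Rightarrow> nat \<Rightarrow> nat" where
  "std_key n Z g i = g i * (n + 1) + (if Z ! g i then i else n - i)"

definition std :: "nat \<Rightarrow> bool list \<Rightarrow> (nat \<Rightarrow> nat) \<Rightarrow> nat \<Rightarrow> nat" where
  "std n Z g = (THE \<pi>. sorts n (std_key n Z g) \<pi>)"

lemma std_key_less_iff:
  assumes "u \<in> {1..n}" "v \<in> {1..n}"
  shows "std_key n Z g u < std_key n Z g v \<longleftrightarrow>
     g u < g v \<or> (g u = g v \<and> (if Z ! g u then u < v else v < u))"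
proof -
  have "std_key n Z g u < std_key n Z g v \<longleftrightarrow> g u < g v \<or>
      (g u = g v \<and> (if Z ! g u then u else n - u) < (if Z ! g v then v else n - v))"
    unfolding std_key_def by (rule mixed_radix_less_iff) (use assms in auto)
  then show ?thesis
    using assms by auto
qed

lemma inj_on_std_key: "inj_on (std_key n Z g) {1..n}"
proof (rule inj_onI)
  fix u v assume "u \<in> {1..n}" "v \<in> {1..n}" "std_key n Z g u = std_key n Z g v"
  then show "u = v"
    using std_key_less_iff[of u n v Z g] std_key_less_iff[of v n u Z g]
    by (cases u v rule: linorder_cases; cases "Z ! g u") auto
qed

lemma sorts_std: "sorts n (std_key n Z g) (std n Z g)"
  unfolding std_def
  using sorts_exists sorts_unique inj_on_std_key by (metis theI)

lemma std_eq_iff: "std n Z g = \<pi> \<longleftrightarrow> sorts n (std_key n Z g) \<pi>"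
  using sorts_std sorts_unique inj_on_std_key by metis

lemma std_permutes: "std n Z g permutes {1..n}"
  using sorts_std by (simp add: sorts_def)

lemma std_key_std_less:
  assumes "1 \<le> i" "i < j" "j \<le> n"
  shows "std_key n Z g (std n Z g i) < std_key n Z g (std n Z g j)"
  using sorts_std[of n Z g] assms
  by (intro less_of_adjacent_less[of n "std_key n Z g \<circ> std n Z g", simplified])
    (auto simp: sorts_def)

lemma compatible_step_iff_std_key_less:
  assumes "u \<in> {1..n}" "v \<in> {1..n}" "u \<noteq> v"
  shows "compatible_step Z u v (g u) (g v) \<longleftrightarrow> std_key n Z g u < std_key n Z g v"
  unfolding std_key_less_iff[OF assms(1,2)] compatible_step_def
  using assms(3) by auto

lemma compatible_comp_iff_std_eq:
  assumes \<pi>: "\<pi> permutes {1..n}"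
  shows "compatible n \<pi> Z (g \<circ> \<pi>) \<longleftrightarrow> std n Z g = \<pi>"
proof -
  have "compatible_step Z (\<pi> s) (\<pi> (Suc s)) (g (\<pi> s)) (g (\<pi> (Suc s))) \<longleftrightarrow>
      std_key n Z g (\<pi> s) < std_key n Z g (\<pi> (Suc s))" if "s \<in> {1..<n}" for s
    using that permutes_in_image[OF \<pi>] permutes_inj[OF \<pi>]
    by (intro compatible_step_iff_std_key_less) (auto dest: injD)
  then show ?thesis
    using \<pi> by (auto simp: compatible_def std_eq_iff sorts_def)
qed

lemma Ncount_eq_card_std:
  assumes \<pi>: "\<pi> permutes {1..n}"
  shows "Ncount n \<pi> Z = card {g \<in> colourings n (length Z). std n Z g = \<pi>}"
proof -
  have "bij_betw (\<lambda>g. g \<circ> \<pi>) {g \<in> colourings n (length Z). std n Z g = \<pi>}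
      {a \<in> colourings n (length Z). compatible n \<pi> Z a}"
    by (rule bij_betw_Collect[OF bij_betw_comp_permutes_colourings[OF \<pi>]])
      (simp add: compatible_comp_iff_std_eq[OF \<pi>])
  then show ?thesis
    unfolding Ncount_eq_card_compatible compatible_colourings_def by (simp add: bij_betw_same_card)
qed

section \<open>Products of typed chains\<close>

(* The chain X (x) Y: block j is a copy of X, reversed if Y ! j is minus-type; element p of
   block j sits at position prod_pos X Y j p and is plus-type iff X ! p and Y ! j have the
   same type. *)
definition prod_pos :: "bool list \<Rightarrow> bool list \<Rightarrow> nat \<Rightarrow> nat \<Rightarrow> nat" where
  "prod_pos X Y j p = j * length X + (if Y ! j then p else length X - 1 - p)"

definition prod_fst :: "bool list \<Rightarrow> bool list \<Rightarrow> nat \<Rightarrow> nat" where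
  "prod_fst X Y c =
     (if Y ! (c div length X) then c mod length X else length X - 1 - c mod length X)"

definition chain_prod :: "bool list \<Rightarrow> bool list \<Rightarrow> bool list" where
  "chain_prod X Y =
     map (\<lambda>c. X ! prod_fst X Y c = Y ! (c div length X)) [0..<length X * length Y]"

lemma length_chain_prod [simp]: "length (chain_prod X Y) = length X * length Y"
  by (simp add: chain_prod_def)

lemma
  assumes "p < length X"
  shows prod_pos_div [simp]: "prod_pos X Y j p div length X = j"
    and prod_fst_prod_pos [simp]: "prod_fst X Y (prod_pos X Y j p) = p"
proof -
  have div_mod: "(q + j * length X) div length X = j" "(q + j * length X) mod length X = q"
    if "q < length X" for q
  proof -
    have "length X \<noteq> 0" using that by linarith
    then show "(q + j * length X) div length X = j" "(q + j * length X) mod length X = q"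
      using that by simp_all
  qed
  have "(if Y ! j then p else length X - 1 - p) < length X"
    using assms by auto
  from div_mod[OF this] have "prod_pos X Y j p div length X = j"
    and "prod_pos X Y j p mod length X = (if Y ! j then p else length X - 1 - p)"
    by (simp_all add: prod_pos_def add.commute[of "j * length X"])
  then show "prod_pos X Y j p div length X = j" "prod_fst X Y (prod_pos X Y j p) = p"
    using assms by (auto simp: prod_fst_def)
qed

lemma prod_pos_prod_fst:
  assumes "X \<noteq> []"
  shows "prod_pos X Y (c div length X) (prod_fst X Y c) = c"
proof -
  have "c mod length X < length X" using assms by simp
  then show ?thesis by (auto simp: prod_fst_def prod_pos_def)
qed

lemma prod_fst_less: "X \<noteq> [] \<Longrightarrow> prod_fst X Y c < length X"
  by (auto simp: prod_fst_def)

lemma prod_pos_less_iff: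
  assumes "p < length X" "p' < length X"
  shows "prod_pos X Y j p < prod_pos X Y j' p' \<longleftrightarrow>
    j < j' \<or> (j = j' \<and> (if Y ! j then p < p' else p' < p))"
proof -
  have "prod_pos X Y j p < prod_pos X Y j' p' \<longleftrightarrow> j < j' \<or>
      (j = j' \<and>
        (if Y ! j then p else length X - 1 - p) < (if Y ! j' then p' else length X - 1 - p'))"
    unfolding prod_pos_def by (rule mixed_radix_less_iff) (use assms in auto)
  then show ?thesis
    using assms by auto
qed

lemma prod_pos_less_length:
  assumes "j < length Y" "p < length X"
  shows "prod_pos X Y j p < length (chain_prod X Y)"
proof -
  have "prod_pos X Y j p < length Y * length X + 0"
    unfolding prod_pos_def by (subst mixed_radix_less_iff) (use assms in auto)
  then show ?thesis by (simp add: mult.commute)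
qed

lemma nth_chain_prod_prod_pos:
  assumes "j < length Y" "p < length X"
  shows "chain_prod X Y ! prod_pos X Y j p \<longleftrightarrow> (X ! p \<longleftrightarrow> Y ! j)"
  using prod_pos_less_length[OF assms] assms by (simp add: chain_prod_def)

(* h colours the positions in the order given by std n X g. *)
definition prod_colouring ::
    "nat \<Rightarrow> bool list \<Rightarrow> bool list \<Rightarrow> (nat \<Rightarrow> nat) \<Rightarrow> (nat \<Rightarrow> nat) \<Rightarrow> nat \<Rightarrow> nat" where
  "prod_colouring n X Y g h i =
     (if i \<in> {1..n} then prod_pos X Y (h (inv (std n X g) i)) (g i) else undefined)"

lemma prod_colouring_std:
  assumes "w \<in> {1..n}"
  shows "prod_colouring n X Y g h (std n X g w) = prod_pos X Y (h w) (g (std n X g w))"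
proof -
  have "std n X g w \<in> {1..n}"
    using assms permutes_in_image[OF std_permutes] by blast
  then show ?thesis
    by (simp add: prod_colouring_def permutes_inverses(2)[OF std_permutes])
qed

lemma std_prod_colouring:
  assumes g: "g \<in> colourings n (length X)" and h: "h \<in> colourings n (length Y)"
  shows "std n (chain_prod X Y) (prod_colouring n X Y g h) = std n X g \<circ> std n Y h"
proof -
  define \<tau> where "\<tau> = std n X g"
  define \<upsilon> where "\<upsilon> = std n Y h"
  define G where "G = prod_colouring n X Y g h"
  have \<tau>: "\<tau> permutes {1..n}" and \<upsilon>: "\<upsilon> permutes {1..n}"
    unfolding \<tau>_def \<upsilon>_def by (rule std_permutes)+
  \<comment> \<open>The g-keys increase along \<open>\<tau>\<close>; inside a block of h-colour j, \<open>prod_pos\<close> keeps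
      their order if \<open>Y ! j\<close> is plus-type and reverses it otherwise, which is how the
      h-key orders the positions of colour j.\<close>
  have "std_key n (chain_prod X Y) G (\<tau> u) < std_key n (chain_prod X Y) G (\<tau> v)"
    if uv: "u \<in> {1..n}" "v \<in> {1..n}" and key: "std_key n Y h u < std_key n Y h v" for u v
  proof -
    have \<tau>uv: "\<tau> u \<in> {1..n}" "\<tau> v \<in> {1..n}"
      using uv permutes_in_image[OF \<tau>] by blast+
    have lt: "g (\<tau> u) < length X" "g (\<tau> v) < length X" "h u < length Y"
      using \<tau>uv uv g h by (auto simp: colourings_less)
    have G: "G (\<tau> u) = prod_pos X Y (h u) (g (\<tau> u))" "G (\<tau> v) = prod_pos X Y (h v) (g (\<tau> v))"
      using uv by (simp_all add: G_def \<tau>_def prod_colouring_std)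
    have g_key: "std_key n X g (\<tau> a) < std_key n X g (\<tau> b)"
      if "a \<in> {1..n}" "b \<in> {1..n}" "a < b" for a b
      using that std_key_std_less[of a b n X g] by (simp add: \<tau>_def)
    show ?thesis
      using key g_key[OF uv] g_key[OF uv(2,1)] lt
      unfolding std_key_less_iff[OF uv] std_key_less_iff[OF \<tau>uv(1,2)]
        std_key_less_iff[OF \<tau>uv(2,1)] G prod_pos_less_iff[OF lt(1,2)]
      by (auto simp: nth_chain_prod_prod_pos split: if_splits)
  qed
  then have "sorts n (std_key n (chain_prod X Y) G) (\<tau> \<circ> \<upsilon>)"
    using sorts_std[of n Y h] \<tau> \<upsilon> permutes_in_image[OF \<upsilon>]
    by (auto simp: sorts_def \<upsilon>_def permutes_compose)
  then show ?thesis
    by (simp add: std_eq_iff G_def \<tau>_def \<upsilon>_def)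
qed

definition colouring_fst :: "nat \<Rightarrow> bool list \<Rightarrow> bool list \<Rightarrow> (nat \<Rightarrow> nat) \<Rightarrow> nat \<Rightarrow> nat" where
  "colouring_fst n X Y G i = (if i \<in> {1..n} then prod_fst X Y (G i) else undefined)"

definition colouring_snd :: "nat \<Rightarrow> bool list \<Rightarrow> bool list \<Rightarrow> (nat \<Rightarrow> nat) \<Rightarrow> nat \<Rightarrow> nat" where
  "colouring_snd n X Y G j =
     (if j \<in> {1..n} then G (std n X (colouring_fst n X Y G) j) div length X else undefined)"

lemma std_in_atLeastAtMost:
  assumes "w \<in> {1..n}"
  shows "std n X g w \<in> {1..n}" and "inv (std n X g) w \<in> {1..n}"
  using assms permutes_in_image[OF std_permutes] permutes_in_image[OF permutes_inv[OF std_permutes]]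
  by blast+

lemma prod_colouring_in_colourings:
  assumes g: "g \<in> colourings n (length X)" and h: "h \<in> colourings n (length Y)"
  shows "prod_colouring n X Y g h \<in> colourings n (length (chain_prod X Y))"
proof -
  have "prod_pos X Y (h (inv (std n X g) i)) (g i) < length (chain_prod X Y)" if "i \<in> {1..n}" for i
    using that std_in_atLeastAtMost(2)[OF that]
    by (intro prod_pos_less_length colourings_less[OF h] colourings_less[OF g])
  then show ?thesis
    by (intro colouringsI) (auto simp: prod_colouring_def)
qed

lemma colouring_fst_prod_colouring:
  assumes "g \<in> colourings n (length X)"
  shows "colouring_fst n X Y (prod_colouring n X Y g h) = g"
  using colourings_less[OF assms] colourings_undefined[OF assms]
  by (auto simp: colouring_fst_def prod_colouring_def)

lemma colouring_snd_prod_colouring: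
  assumes "g \<in> colourings n (length X)" and "h \<in> colourings n (length Y)"
  shows "colouring_snd n X Y (prod_colouring n X Y g h) = h"
  using colourings_less[OF assms(1)] colourings_undefined[OF assms(2)] std_in_atLeastAtMost
  by (auto simp: colouring_snd_def colouring_fst_prod_colouring[OF assms(1)] prod_colouring_std)

lemma colouring_fst_in_colourings:
  "X \<noteq> [] \<Longrightarrow> colouring_fst n X Y G \<in> colourings n (length X)"
  by (auto intro!: colouringsI simp: colouring_fst_def prod_fst_less)

lemma colouring_snd_in_colourings:
  assumes X: "X \<noteq> []" and G: "G \<in> colourings n (length (chain_prod X Y))"
  shows "colouring_snd n X Y G \<in> colourings n (length Y)"
proof -
  have "G (std n X (colouring_fst n X Y G) j) div length X < length Y" if "j \<in> {1..n}" for j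
    using colourings_less[OF G std_in_atLeastAtMost(1)[OF that]] X
    by (simp add: div_less_iff_less_mult mult.commute)
  then show ?thesis
    by (auto intro!: colouringsI simp: colouring_snd_def)
qed

lemma prod_colouring_colouring_fst_snd:
  assumes X: "X \<noteq> []" and G: "G \<in> colourings n (length (chain_prod X Y))"
  shows "prod_colouring n X Y (colouring_fst n X Y G) (colouring_snd n X Y G) = G"
proof
  fix i
  show "prod_colouring n X Y (colouring_fst n X Y G) (colouring_snd n X Y G) i = G i"
  proof (cases "i \<in> {1..n}")
    case True
    have "colouring_snd n X Y G (inv (std n X (colouring_fst n X Y G)) i) = G i div length X"
      using std_in_atLeastAtMost[OF True]
      by (simp add: colouring_snd_def permutes_inverses(1)[OF std_permutes])
    then show ?thesis
      using True X by (simp add: prod_colouring_def colouring_fst_def prod_pos_prod_fst)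
  qed (auto simp: prod_colouring_def colourings_undefined[OF G])
qed

lemma bij_betw_prod_colouring:
  assumes "X \<noteq> []"
  shows "bij_betw (\<lambda>(g, h). prod_colouring n X Y g h)
    (colourings n (length X) \<times> colourings n (length Y)) (colourings n (length (chain_prod X Y)))"
  by (rule bij_betw_byWitness[where f' = "\<lambda>G. (colouring_fst n X Y G, colouring_snd n X Y G)"])
    (auto simp: assms colouring_fst_prod_colouring colouring_snd_prod_colouring
      prod_colouring_colouring_fst_snd prod_colouring_in_colourings[simplified]
      colouring_fst_in_colourings colouring_snd_in_colourings)

lemma card_std_comp_eq_card_std_chain_prod:
  assumes "X \<noteq> []"
  shows "card {gh \<in> colourings n (length X) \<times> colourings n (length Y).
      std n X (fst gh) \<circ> std n Y (snd gh) = \<sigma>}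
    = card {G \<in> colourings n (length (chain_prod X Y)). std n (chain_prod X Y) G = \<sigma>}"
  by (rule bij_betw_same_card, rule bij_betw_Collect[OF bij_betw_prod_colouring[OF assms]])
    (auto simp: std_prod_colouring)

lemma sum_comp_eq_sum_card_fibres:
  fixes F :: "'b \<Rightarrow> nat"
  assumes "finite A" "finite B" "f ` A \<subseteq> B"
  shows "(\<Sum>x\<in>A. F (f x)) = (\<Sum>y\<in>B. card {x \<in> A. f x = y} * F y)"
  using sum.group[OF assms, of "\<lambda>x. F (f x)"] by simp

lemma Ncount_chain_prod:
  assumes X: "X \<noteq> []" and \<sigma>: "\<sigma> permutes {1..n}"
  shows "(\<Sum>\<tau> | \<tau> permutes {1..n}. \<Sum>\<upsilon> | \<upsilon> permutes {1..n}.
            if \<tau> \<circ> \<upsilon> = \<sigma> then Ncount n \<tau> X * Ncount n \<upsilon> Y else 0)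
         = Ncount n \<sigma> (chain_prod X Y)"
proof -
  define P where "P = {\<tau>. \<tau> permutes {1..n}}"
  define A where "A = colourings n (length X)"
  define B where "B = colourings n (length Y)"
  define cX where "cX \<tau> = card {g \<in> A. std n X g = \<tau>}" for \<tau>
  define cY where "cY \<upsilon> = card {h \<in> B. std n Y h = \<upsilon>}" for \<upsilon>
  have fin: "finite P" "finite A" "finite B"
    by (simp_all add: P_def A_def B_def finite_permutations)
  have std_in_P: "std n X ` A \<subseteq> P" "std n Y ` B \<subseteq> P"
    unfolding P_def using std_permutes by blast+
  have "(\<Sum>\<tau>\<in>P. \<Sum>\<upsilon>\<in>P. if \<tau> \<circ> \<upsilon> = \<sigma> then Ncount n \<tau> X * Ncount n \<upsilon> Y else 0)
      = (\<Sum>\<tau>\<in>P. cX \<tau> * (\<Sum>\<upsilon>\<in>P. cY \<upsilon> * (if \<tau> \<circ> \<upsilon> = \<sigma> then 1 else 0)))"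
    unfolding sum_distrib_left
    by (intro sum.cong refl) (simp add: P_def cX_def cY_def A_def B_def Ncount_eq_card_std)
  also have "\<dots> = (\<Sum>g\<in>A. \<Sum>\<upsilon>\<in>P. cY \<upsilon> * (if std n X g \<circ> \<upsilon> = \<sigma> then 1 else 0))"
    unfolding cX_def by (rule sum_comp_eq_sum_card_fibres[symmetric]) (use fin std_in_P in auto)
  also have "\<dots> = (\<Sum>g\<in>A. \<Sum>h\<in>B. if std n X g \<circ> std n Y h = \<sigma> then 1 else 0)"
    unfolding cY_def
    by (intro sum.cong refl sum_comp_eq_sum_card_fibres[symmetric]) (use fin std_in_P in auto)
  also have "\<dots> = (\<Sum>gh\<in>A \<times> B. if std n X (fst gh) \<circ> std n Y (snd gh) = \<sigma> then 1 else 0)"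
    by (simp add: sum.cartesian_product split_def)
  also have "\<dots> = card {gh \<in> A \<times> B. std n X (fst gh) \<circ> std n Y (snd gh) = \<sigma>}"
    using fin by (simp add: sum.If_cases Int_def)
  also have "\<dots> = Ncount n \<sigma> (chain_prod X Y)"
    unfolding A_def B_def card_std_comp_eq_card_std_chain_prod[OF X] Ncount_eq_card_std[OF \<sigma>] ..
  finally show ?thesis
    by (simp add: P_def)
qed

definition count_series :: "nat \<Rightarrow> bool list \<Rightarrow> (nat \<Rightarrow> nat) \<Rightarrow> 'r::comm_ring_1" where
  "count_series n Z \<pi> = (if \<pi> permutes {1..n} then of_nat (Ncount n \<pi> Z) else 0)"

lemma galg_mult_count_series:
  assumes "X \<noteq> []"
  shows "galg_mult n (count_series n X) (count_series n Y) = count_series n (chain_prod X Y)"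
proof
  fix \<sigma> :: "nat \<Rightarrow> nat"
  have comp: "\<tau> \<circ> \<upsilon> permutes {1..n}" if "\<tau> permutes {1..n}" "\<upsilon> permutes {1..n}" for \<tau> \<upsilon>
    using permutes_compose[OF that(2,1)] .
  show "galg_mult n (count_series n X) (count_series n Y) \<sigma> = count_series n (chain_prod X Y) \<sigma>"
  proof (cases "\<sigma> permutes {1..n}")
    case True
    have "galg_mult n (count_series n X) (count_series n Y) \<sigma> =
        (\<Sum>\<tau> | \<tau> permutes {1..n}. \<Sum>\<upsilon> | \<upsilon> permutes {1..n}.
            of_nat (if \<tau> \<circ> \<upsilon> = \<sigma> then Ncount n \<tau> X * Ncount n \<upsilon> Y else 0))"
      unfolding galg_mult_def count_series_def by (intro sum.cong refl) auto
    also have "\<dots> = of_nat (Ncount n \<sigma> (chain_prod X Y))"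
      unfolding of_nat_sum[symmetric] Ncount_chain_prod[OF assms True] ..
    finally show ?thesis
      using True by (simp add: count_series_def)
  next
    case False
    then show ?thesis
      using comp by (auto simp: galg_mult_def count_series_def intro!: sum.neutral)
  qed
qed

section \<open>Splitting a chain\<close>

lemma compatible_step_less: "u < v \<Longrightarrow> compatible_step Z x y u v"
  by (simp add: compatible_step_def)

lemma compatible_step_append_left:
  "u < length Z\<^sub>1 \<Longrightarrow> v < length Z\<^sub>1 \<Longrightarrow>
   compatible_step (Z\<^sub>1 @ Z\<^sub>2) x y u v \<longleftrightarrow> compatible_step Z\<^sub>1 x y u v"
  by (auto simp: compatible_step_def nth_append)

lemma compatible_step_append_right:
  "length Z\<^sub>1 \<le> u \<Longrightarrow> length Z\<^sub>1 \<le> v \<Longrightarrow>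
   compatible_step (Z\<^sub>1 @ Z\<^sub>2) x y u v \<longleftrightarrow> compatible_step Z\<^sub>2 x y (u - length Z\<^sub>1) (v - length Z\<^sub>1)"
  by (auto simp: compatible_step_def nth_append)

lemma compatible_mono:
  assumes "compatible n \<pi> Z a" "1 \<le> i" "i \<le> j" "j \<le> n"
  shows "a i \<le> a j"
  using assms(3,4)
proof (induction j rule: dec_induct)
  case (step m)
  then have "a m \<le> a (Suc m)"
    using assms(1,2) by (auto simp: compatible_def compatible_step_def)
  with step show ?case by simp
qed simp

lemma Ncount_0 [simp]: "Ncount 0 \<pi> Z = 1"
  by (simp add: Ncount_eq_card_compatible compatible_colourings_def colourings_def compatible_def)

definition join_colourings :: "nat \<Rightarrow> nat \<Rightarrow> nat \<Rightarrow> (nat \<Rightarrow> nat) \<Rightarrow> (nat \<Rightarrow> nat) \<Rightarrow> nat \<Rightarrow> nat" where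
  "join_colourings n L j b c s =
     (if s \<in> {1..j} then b s else if s \<in> {j + 1..n} then c (s - j) + L else undefined)"

lemma join_colourings_in_colourings:
  assumes j: "j \<le> n" and b: "b \<in> colourings j L" and c: "c \<in> colourings (n - j) M"
  shows "join_colourings n L j b c \<in> colourings n (L + M)"
proof (rule colouringsI)
  fix s assume s: "s \<in> {1..n}"
  show "join_colourings n L j b c s < L + M"
  proof (cases "s \<le> j")
    case True
    then show ?thesis using colourings_less[OF b, of s] s by (simp add: join_colourings_def)
  next
    case False
    then have "s - j \<in> {1..n - j}" using s by auto
    then show ?thesis
      using colourings_less[OF c, of "s - j"] s False by (simp add: join_colourings_def)
  qed
qed (use j in \<open>auto simp: join_colourings_def\<close>)

lemma join_colourings_cut:
  assumes "j \<le> n" "b \<in> colourings j L"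
  shows "{s \<in> {1..n}. join_colourings n L j b c s < L} = {1..j}"
  using assms colourings_less by (auto simp: join_colourings_def)

lemma inj_on_join_colourings:
  "inj_on (\<lambda>(j, b, c). join_colourings n L j b c)
     (SIGMA j:{..n}. colourings j L \<times> colourings (n - j) M)"
proof (rule inj_onI, clarsimp)
  fix j b c j' b' c'
  assume j: "j \<le> n" "j' \<le> n"
    and col: "b \<in> colourings j L" "c \<in> colourings (n - j) M"
      "b' \<in> colourings j' L" "c' \<in> colourings (n - j') M"
    and eq: "join_colourings n L j b c = join_colourings n L j' b' c'"
  have "{1..j} = {1..j'}"
    using join_colourings_cut[OF j(1) col(1), of c] join_colourings_cut[OF j(2) col(3), of c'] eq
    by simp
  then have "j = j'"
    by (metis card_atLeastAtMost diff_Suc_1)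
  have "b s = b' s" for s
  proof (cases "s \<in> {1..j}")
    case True
    then show ?thesis
      using fun_cong[OF eq, of s] \<open>j = j'\<close> by (simp add: join_colourings_def)
  qed (metis col(1,3) \<open>j = j'\<close> colourings_undefined)
  moreover have "c s = c' s" for s
  proof (cases "s \<in> {1..n - j}")
    case True
    then have "s + j \<le> n" "s \<noteq> 0" using j(1) by auto
    then have "join_colourings n L j b c (s + j) = c s + L"
      "join_colourings n L j' b' c' (s + j) = c' s + L"
      using \<open>j = j'\<close> by (simp_all add: join_colourings_def)
    then show ?thesis
      using eq by simp
  qed (metis col(2,4) \<open>j = j'\<close> colourings_undefined)
  ultimately show "j = j' \<and> b = b' \<and> c = c'"
    using \<open>j = j'\<close> by auto
qed

lemma join_colourings_in_compatible_colourings: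
  assumes j: "j \<le> n"
    and b: "b \<in> compatible_colourings j \<pi> Z\<^sub>1"
    and c: "c \<in> compatible_colourings (n - j) (\<lambda>s. \<pi> (s + j)) Z\<^sub>2"
  shows "join_colourings n (length Z\<^sub>1) j b c \<in> compatible_colourings n \<pi> (Z\<^sub>1 @ Z\<^sub>2)"
proof -
  define a where "a = join_colourings n (length Z\<^sub>1) j b c"
  have b_less: "b s < length Z\<^sub>1" if "s \<in> {1..j}" for s
    using b that by (auto simp: compatible_colourings_def colourings_less)
  have "a \<in> colourings n (length (Z\<^sub>1 @ Z\<^sub>2))"
    using join_colourings_in_colourings[OF j] b c by (simp add: a_def compatible_colourings_def)
  moreover have "compatible_step (Z\<^sub>1 @ Z\<^sub>2) (\<pi> s) (\<pi> (Suc s)) (a s) (a (Suc s))"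
    if s: "s \<in> {1..<n}" for s
  proof (cases "Suc s \<le> j")
    case True
    then show ?thesis
      using b s b_less[of s] b_less[of "Suc s"]
      by (simp add: a_def join_colourings_def compatible_step_append_left
          compatible_colourings_def compatible_def)
  next
    case False
    show ?thesis
    proof (cases "s = j")
      case True
      then show ?thesis
        using s b_less[of s] by (intro compatible_step_less) (simp add: a_def join_colourings_def)
    next
      case False
      then have sj: "s - j \<in> {1..<n - j}"
        and idx: "s - j + j = s" "Suc (s - j) + j = Suc s" "Suc (s - j) = Suc s - j"
        using s \<open>\<not> Suc s \<le> j\<close> by auto
      have "compatible_step Z\<^sub>2 (\<pi> (s - j + j)) (\<pi> (Suc (s - j) + j)) (c (s - j)) (c (Suc (s - j)))"
        using c sj by (auto simp: compatible_colourings_def compatible_def)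
      then show ?thesis
        using \<open>\<not> Suc s \<le> j\<close> False s
        by (simp add: idx a_def join_colourings_def compatible_step_append_right)
    qed
  qed
  ultimately show ?thesis
    by (simp add: a_def compatible_colourings_def compatible_def)
qed

lemma compatible_colourings_append_prefix:
  assumes a: "a \<in> compatible_colourings n \<pi> (Z\<^sub>1 @ Z\<^sub>2)" and j: "j \<le> n"
    and cut: "\<And>s. s \<in> {1..n} \<Longrightarrow> a s < length Z\<^sub>1 \<longleftrightarrow> s \<le> j"
  shows "(\<lambda>s. if s \<in> {1..j} then a s else undefined) \<in> compatible_colourings j \<pi> Z\<^sub>1"
  unfolding compatible_colourings_def compatible_def
proof (intro CollectI conjI ballI)
  show "(\<lambda>s. if s \<in> {1..j} then a s else undefined) \<in> colourings j (length Z\<^sub>1)"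
    using cut j by (intro colouringsI) auto
  fix s assume s: "s \<in> {1..<j}"
  then have "a s < length Z\<^sub>1" "a (Suc s) < length Z\<^sub>1"
    using cut j by auto
  moreover have "compatible_step (Z\<^sub>1 @ Z\<^sub>2) (\<pi> s) (\<pi> (Suc s)) (a s) (a (Suc s))"
    using a s j by (auto simp: compatible_colourings_def compatible_def)
  ultimately show "compatible_step Z\<^sub>1 (\<pi> s) (\<pi> (Suc s))
      ((\<lambda>s. if s \<in> {1..j} then a s else undefined) s)
      ((\<lambda>s. if s \<in> {1..j} then a s else undefined) (Suc s))"
    using s by (simp add: compatible_step_append_left)
qed

lemma compatible_colourings_append_suffix:
  assumes a: "a \<in> compatible_colourings n \<pi> (Z\<^sub>1 @ Z\<^sub>2)" and j: "j \<le> n"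
    and cut: "\<And>s. s \<in> {1..n} \<Longrightarrow> a s < length Z\<^sub>1 \<longleftrightarrow> s \<le> j"
  shows "(\<lambda>s. if s \<in> {1..n - j} then a (s + j) - length Z\<^sub>1 else undefined)
    \<in> compatible_colourings (n - j) (\<lambda>s. \<pi> (s + j)) Z\<^sub>2"
  (is "?c \<in> _")
  unfolding compatible_colourings_def compatible_def
proof (intro CollectI conjI ballI)
  show "?c \<in> colourings (n - j) (length Z\<^sub>2)"
  proof (rule colouringsI)
    fix s assume s: "s \<in> {1..n - j}"
    then have "s + j \<in> {1..n}" using j by auto
    then have "length Z\<^sub>1 \<le> a (s + j)" "a (s + j) < length Z\<^sub>1 + length Z\<^sub>2"
      using s cut[of "s + j"] a by (auto simp: compatible_colourings_def colourings_less)
    then show "?c s < length Z\<^sub>2" using s by simp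
  qed auto
  fix s assume s: "s \<in> {1..<n - j}"
  then have sj: "s + j \<in> {1..<n}" by auto
  then have "s + j \<in> {1..n}" "Suc s + j \<in> {1..n}" by auto
  then have "length Z\<^sub>1 \<le> a (s + j)" "length Z\<^sub>1 \<le> a (Suc s + j)"
    using s cut[of "s + j"] cut[of "Suc s + j"] by auto
  moreover have "compatible_step (Z\<^sub>1 @ Z\<^sub>2) (\<pi> (s + j)) (\<pi> (Suc (s + j)))
      (a (s + j)) (a (Suc (s + j)))"
    using a sj by (simp add: compatible_colourings_def compatible_def)
  ultimately show "compatible_step Z\<^sub>2 ((\<lambda>s. \<pi> (s + j)) s) ((\<lambda>s. \<pi> (s + j)) (Suc s))
      (?c s) (?c (Suc s))"
    using s by (simp add: compatible_step_append_right)
qed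

lemma down_closed_eq_atLeastAtMost:
  fixes D :: "nat set"
  assumes closed: "\<And>s t. s \<in> D \<Longrightarrow> t \<in> {1..s} \<Longrightarrow> t \<in> D" and D: "D \<subseteq> {1..n}"
  obtains j where "j \<le> n" "D = {1..j}"
proof (cases "D = {}")
  case False
  have fin: "finite D" using D finite_subset by blast
  have "D = {1..Max D}"
  proof
    show "D \<subseteq> {1..Max D}" using D Max_ge[OF fin] by auto
    show "{1..Max D} \<subseteq> D" using closed[OF Max_in[OF fin False]] by auto
  qed
  moreover have "Max D \<le> n" using False D Max_in[OF fin] by auto
  ultimately show ?thesis using that by blast
qed (use that in auto)

lemma compatible_colourings_split:
  assumes a: "a \<in> compatible_colourings n \<pi> (Z\<^sub>1 @ Z\<^sub>2)"
  obtains j b c where "j \<le> n" "b \<in> compatible_colourings j \<pi> Z\<^sub>1"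
    "c \<in> compatible_colourings (n - j) (\<lambda>s. \<pi> (s + j)) Z\<^sub>2"
    "a = join_colourings n (length Z\<^sub>1) j b c"
proof -
  have a_col: "a \<in> colourings n (length Z\<^sub>1 + length Z\<^sub>2)"
    and a_comp: "compatible n \<pi> (Z\<^sub>1 @ Z\<^sub>2) a"
    using a by (simp_all add: compatible_colourings_def)
  have "\<exists>j\<le>n. {s \<in> {1..n}. a s < length Z\<^sub>1} = {1..j}"
  proof (rule down_closed_eq_atLeastAtMost)
    fix s t assume "s \<in> {s \<in> {1..n}. a s < length Z\<^sub>1}" "t \<in> {1..s}"
    then show "t \<in> {s \<in> {1..n}. a s < length Z\<^sub>1}"
      using compatible_mono[OF a_comp, of t s] by auto
  qed auto
  then obtain j where j: "j \<le> n" "{s \<in> {1..n}. a s < length Z\<^sub>1} = {1..j}"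
    by blast
  have cut: "a s < length Z\<^sub>1 \<longleftrightarrow> s \<le> j" if "s \<in> {1..n}" for s
    using that j(2)[unfolded set_eq_iff, rule_format, of s] by auto
  have "a = join_colourings n (length Z\<^sub>1) j (\<lambda>s. if s \<in> {1..j} then a s else undefined)
      (\<lambda>s. if s \<in> {1..n - j} then a (s + j) - length Z\<^sub>1 else undefined)"
  proof
    fix s
    show "a s = join_colourings n (length Z\<^sub>1) j (\<lambda>s. if s \<in> {1..j} then a s else undefined)
        (\<lambda>s. if s \<in> {1..n - j} then a (s + j) - length Z\<^sub>1 else undefined) s"
      using cut[of s] j(1) colourings_undefined[OF a_col, of s]
      by (auto simp: join_colourings_def)
  qed
  with that j(1) compatible_colourings_append_prefix[OF a j(1) cut]
    compatible_colourings_append_suffix[OF a j(1) cut]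
  show ?thesis by blast
qed

lemma Ncount_append:
  "Ncount n \<pi> (Z\<^sub>1 @ Z\<^sub>2) = (\<Sum>j\<le>n. Ncount j \<pi> Z\<^sub>1 * Ncount (n - j) (\<lambda>s. \<pi> (s + j)) Z\<^sub>2)"
proof -
  define A where "A j = compatible_colourings j \<pi> Z\<^sub>1" for j
  define B where "B j = compatible_colourings (n - j) (\<lambda>s. \<pi> (s + j)) Z\<^sub>2" for j
  define join where "join = (\<lambda>(j, b, c). join_colourings n (length Z\<^sub>1) j b c)"
  have "inj_on join (SIGMA j:{..n}. A j \<times> B j)"
    unfolding join_def
    by (rule inj_on_subset[OF inj_on_join_colourings])
      (auto simp: A_def B_def compatible_colourings_def)
  moreover have image: "join ` (SIGMA j:{..n}. A j \<times> B j) = compatible_colourings n \<pi> (Z\<^sub>1 @ Z\<^sub>2)"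
  proof
    show "join ` (SIGMA j:{..n}. A j \<times> B j) \<subseteq> compatible_colourings n \<pi> (Z\<^sub>1 @ Z\<^sub>2)"
      by (auto simp: join_def A_def B_def join_colourings_in_compatible_colourings)
    show "compatible_colourings n \<pi> (Z\<^sub>1 @ Z\<^sub>2) \<subseteq> join ` (SIGMA j:{..n}. A j \<times> B j)"
    proof
      fix a assume a: "a \<in> compatible_colourings n \<pi> (Z\<^sub>1 @ Z\<^sub>2)"
      obtain j b c where "j \<le> n" "b \<in> A j" "c \<in> B j"
        and "a = join_colourings n (length Z\<^sub>1) j b c"
        unfolding A_def B_def by (rule compatible_colourings_split[OF a])
      then show "a \<in> join ` (SIGMA j:{..n}. A j \<times> B j)"
        by (intro rev_image_eqI[of "(j, b, c)"]) (simp_all add: join_def)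
    qed
  qed
  ultimately have "Ncount n \<pi> (Z\<^sub>1 @ Z\<^sub>2) = card (SIGMA j:{..n}. A j \<times> B j)"
    by (simp add: Ncount_eq_card_compatible card_image flip: image)
  also have "\<dots> = (\<Sum>j\<le>n. Ncount j \<pi> Z\<^sub>1 * Ncount (n - j) (\<lambda>s. \<pi> (s + j)) Z\<^sub>2)"
    by (simp add: card_SigmaI card_cartesian_product A_def B_def Ncount_eq_card_compatible
        compatible_colourings_def)
  finally show ?thesis .
qed

section \<open>Polynomiality in the chain length\<close>

lemma poly_antidifference_monom:
  "\<exists>p :: 'a::field_char_0 poly. \<forall>x. poly p (x + 1) - poly p x = x ^ i"
proof (induction i rule: less_induct)
  case (less i)
  then obtain P :: "nat \<Rightarrow> 'a poly"
    where P: "\<And>j x. j < i \<Longrightarrow> poly (P j) (x + 1) - poly (P j) x = x ^ j"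
    by metis
  define p where "p = smult (1 / of_nat (Suc i))
      (monom 1 (Suc i) - (\<Sum>j<i. smult (of_nat (Suc i choose j)) (P j)))"
  have "poly p (x + 1) - poly p x = x ^ i" for x
  proof -
    have "(x + 1) ^ Suc i = (\<Sum>j\<le>Suc i. of_nat (Suc i choose j) * x ^ j)"
      using binomial_ring[of x 1 "Suc i"] by simp
    also have "\<dots> = (\<Sum>j<i. of_nat (Suc i choose j) * x ^ j) + of_nat (Suc i) * x ^ i + x ^ Suc i"
      by (simp add: lessThan_Suc_atMost[symmetric])
    finally have binomial: "(x + 1) ^ Suc i - x ^ Suc i =
        of_nat (Suc i) * x ^ i + (\<Sum>j<i. of_nat (Suc i choose j) * x ^ j)"
      by simp
    have "poly p (x + 1) - poly p x = (1 / of_nat (Suc i)) * (((x + 1) ^ Suc i - x ^ Suc i) -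
        (\<Sum>j<i. of_nat (Suc i choose j) * (poly (P j) (x + 1) - poly (P j) x)))"
      by (simp add: p_def poly_monom poly_sum algebra_simps sum_subtractf)
    also have "\<dots> = x ^ i"
      unfolding binomial using P of_nat_neq_0[of i, where 'a = 'a] by simp
    finally show ?thesis .
  qed
  then show ?case by blast
qed

lemma poly_antidifference:
  fixes q :: "'a::field_char_0 poly"
  shows "\<exists>p. \<forall>x. poly p (x + 1) - poly p x = poly q x"
proof -
  obtain P :: "nat \<Rightarrow> 'a poly" where P: "\<And>i x. poly (P i) (x + 1) - poly (P i) x = x ^ i"
    using poly_antidifference_monom by metis
  define p where "p = (\<Sum>i\<le>degree q. smult (coeff q i) (P i))"
  have "poly p (x + 1) - poly p x = poly q x" for x
  proof -
    have "poly p (x + 1) - poly p x =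
        (\<Sum>i\<le>degree q. coeff q i * (poly (P i) (x + 1) - poly (P i) x))"
      by (simp add: p_def poly_sum sum_subtractf right_diff_distrib)
    also have "\<dots> = poly q x"
      unfolding P by (simp add: poly_altdef)
    finally show ?thesis .
  qed
  then show ?thesis by blast
qed

lemma polynomial_if_difference_polynomial:
  fixes f :: "nat \<Rightarrow> 'a::field_char_0"
  assumes "\<And>k. f (Suc k) - f k = poly q (of_nat k)"
  shows "\<exists>p. \<forall>k. poly p (of_nat k) = f k"
proof -
  obtain p\<^sub>0 where p\<^sub>0: "\<And>x. poly p\<^sub>0 (x + 1) - poly p\<^sub>0 x = poly q x"
    using poly_antidifference by blast
  define p where "p = p\<^sub>0 + [:f 0 - poly p\<^sub>0 0:]"
  have "poly p (of_nat k) = f k" for k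
  proof (induction k)
    case (Suc k)
    then show ?case
      using p\<^sub>0[of "of_nat k"] assms[of k] by (simp add: p_def algebra_simps)
  qed (simp add: p_def)
  then show ?thesis by blast
qed

definition alternating_chain :: "bool \<Rightarrow> nat \<Rightarrow> bool list" where
  "alternating_chain e L = map (\<lambda>i. even i = e) [0..<L]"

lemma length_alternating_chain [simp]: "length (alternating_chain e L) = L"
  by (simp add: alternating_chain_def)

lemma alternating_chain_add_2:
  "alternating_chain e (L + 2) = alternating_chain e L @ alternating_chain (even L = e) 2"
proof -
  have "[0..<2] = [0::nat, 1]" by (simp add: upt_rec)
  then show ?thesis by (auto simp: alternating_chain_def add_2_eq_Suc')
qed

(* Appending two elements to the chain changes the count by a combination of counts on fewer
   positions (Ncount_append), which are polynomial by induction; summing this difference gives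
   a polynomial. *)
lemma Ncount_alternating_chain_polynomial:
  "\<exists>p :: rat poly. \<forall>k. poly p (of_nat k) = of_nat (Ncount n \<pi> (alternating_chain e (2 * k + d)))"
proof (induction n rule: less_induct)
  case (less n)
  then obtain Q :: "nat \<Rightarrow> rat poly" where Q:
    "\<And>j k. j < n \<Longrightarrow> poly (Q j) (of_nat k) = of_nat (Ncount j \<pi> (alternating_chain e (2 * k + d)))"
    by metis
  define c :: "nat \<Rightarrow> rat" where
    "c j = of_nat (Ncount (n - j) (\<lambda>s. \<pi> (s + j)) (alternating_chain (even d = e) 2))" for j
  define f :: "nat \<Rightarrow> rat" where
    "f k = of_nat (Ncount n \<pi> (alternating_chain e (2 * k + d)))" for k
  have "f (Suc k) - f k = poly (\<Sum>j<n. smult (c j) (Q j)) (of_nat k)" for k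
  proof -
    have "alternating_chain e (2 * Suc k + d) =
        alternating_chain e (2 * k + d) @ alternating_chain (even d = e) 2"
      using alternating_chain_add_2[of e "2 * k + d"] by (simp add: algebra_simps)
    then have "f (Suc k) = (\<Sum>j\<le>n. of_nat (Ncount j \<pi> (alternating_chain e (2 * k + d))) * c j)"
      by (simp add: f_def c_def Ncount_append)
    also have "\<dots> = (\<Sum>j<n. of_nat (Ncount j \<pi> (alternating_chain e (2 * k + d))) * c j) + f k"
      by (simp add: lessThan_Suc_atMost[symmetric] f_def c_def)
    finally show ?thesis
      by (simp add: poly_sum Q mult.commute)
  qed
  then show ?case
    unfolding f_def by (rule polynomial_if_difference_polynomial)
qed

lemma poly_eqI_infinite:
  fixes p q :: "'a::idom poly"
  assumes "infinite {x. poly p x = poly q x}"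
  shows "p = q"
proof (rule ccontr)
  assume "p \<noteq> q"
  then have "finite {x. poly (p - q) x = 0}"
    by (intro poly_roots_finite) simp
  with assms show False
    by simp
qed

lemma infinite_of_nat_image:
  assumes "infinite N"
  shows "infinite (of_nat ` N :: 'a::semiring_char_0 set)"
  using assms finite_imageD[of "of_nat :: nat \<Rightarrow> 'a" N] by (auto simp: inj_on_def)

lemma poly_eq_if_eq_on_positive_nats:
  fixes p q :: "'a::{idom, ring_char_0} poly"
  assumes "\<And>k. 1 \<le> k \<Longrightarrow> poly p (of_nat k) = poly q (of_nat k)"
  shows "p = q"
proof (rule poly_eqI_infinite)
  have "infinite (of_nat ` {1::nat..} :: 'a set)"
    by (rule infinite_of_nat_image) (rule infinite_Ici)
  moreover have "of_nat ` {1::nat..} \<subseteq> {x. poly p x = poly q x}"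
    using assms by auto
  ultimately show "infinite {x. poly p x = poly q x}"
    using finite_subset by blast
qed

lemma poly_omega_poly:
  assumes "\<exists>p. \<forall>k\<ge>1. poly p (of_nat k) = (of_nat (Ncount n \<pi> (Zf k)) :: rat)" and "1 \<le> k"
  shows "poly (omega_poly n Zf \<pi>) (of_nat k) = of_nat (Ncount n \<pi> (Zf k))"
proof -
  obtain p where p: "\<forall>k\<ge>1. poly p (of_nat k) = (of_nat (Ncount n \<pi> (Zf k)) :: rat)"
    using assms(1) by blast
  have "\<exists>!p. \<forall>k\<ge>1. poly p (of_nat k) = (of_nat (Ncount n \<pi> (Zf k)) :: rat)"
  proof (rule ex1I[of _ p])
    fix q assume "\<forall>k\<ge>1. poly q (of_nat k) = (of_nat (Ncount n \<pi> (Zf k)) :: rat)"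
    with p show "q = p"
      by (intro poly_eq_if_eq_on_positive_nats) simp
  qed (fact p)
  then have "\<forall>k\<ge>1. poly (omega_poly n Zf \<pi>) (of_nat k) = (of_nat (Ncount n \<pi> (Zf k)) :: rat)"
    unfolding omega_poly_def by (rule theI')
  with assms(2) show ?thesis by blast
qed

lemma Zpairs_eq_alternating_chain: "Zpairs k = alternating_chain False (2 * k)"
proof (induction k)
  case (Suc k)
  have snoc: "concat (replicate (Suc j) xs) = concat (replicate j xs) @ xs"
    for j and xs :: "'a list"
    by (induction j) auto
  have "Zpairs (Suc k) = Zpairs k @ [False, True]"
    unfolding Zpairs_def by (rule snoc)
  moreover have "alternating_chain False 2 = [False, True]"
    by (simp add: alternating_chain_def upt_rec)
  ultimately show ?case
    using Suc alternating_chain_add_2[of False "2 * k"] by simp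
qed (simp add: Zpairs_def alternating_chain_def)

lemma Z_prime_eq_alternating_chain: "Z_prime k = alternating_chain False (2 * k)"
  by (simp add: Z_prime_def Zpairs_eq_alternating_chain)

lemma Z_right_eq_alternating_chain: "Z_right k = alternating_chain False (2 * k + 1)"
  by (simp add: Z_right_def Zpairs_eq_alternating_chain alternating_chain_def)

lemma Z_left_eq_alternating_chain: "Z_left k = alternating_chain True (2 * k + 1)"
proof -
  have "[0..<2 * k + 1] = 0 # map Suc [0..<2 * k]"
    by (simp add: map_Suc_upt upt_conv_Cons)
  then show ?thesis
    by (simp add: Z_left_def Zpairs_eq_alternating_chain alternating_chain_def)
qed

lemma Z_bar_eq_alternating_chain:
  assumes "1 \<le> k"
  shows "Z_bar k = alternating_chain True (2 * k)"
proof -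
  have "Z_bar k = Z_left (k - 1) @ [False]"
    by (simp add: Z_bar_def Z_left_def)
  also have "\<dots> = alternating_chain True (2 * (k - 1) + 2)"
    by (simp add: Z_left_eq_alternating_chain alternating_chain_def)
  also have "2 * (k - 1) + 2 = 2 * k"
    using assms by simp
  finally show ?thesis .
qed

lemma chain_prod_alternating_chain:
  "chain_prod (alternating_chain e L) (alternating_chain f M) =
     alternating_chain (if even L then e else e = f) (L * M)"
proof (rule nth_equalityI)
  fix c assume "c < length (chain_prod (alternating_chain e L) (alternating_chain f M))"
  then have c: "c < L * M" by simp
  then have L: "0 < L" by (cases L) auto
  define j where "j = c div L"
  define q where "q = c mod L"
  have jq: "c = j * L + q" "q < L" "j < M"
    using c L by (auto simp: j_def q_def div_less_iff_less_mult mult.commute)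
  have rev: "even (L - 1 - q) \<longleftrightarrow> (even q \<longleftrightarrow> odd L)"
    using jq(2) by presburger
  have par: "even c \<longleftrightarrow> ((even j \<or> even L) \<longleftrightarrow> even q)"
    unfolding jq(1) by (simp add: even_add even_mult_iff)
  show "chain_prod (alternating_chain e L) (alternating_chain f M) ! c =
      alternating_chain (if even L then e else e = f) (L * M) ! c"
    using c jq rev par
    by (auto simp: chain_prod_def prod_fst_def alternating_chain_def
        j_def[symmetric] q_def[symmetric])
qed simp

section \<open>Bivariate evaluation\<close>

definition poly2 :: "rat poly poly \<Rightarrow> rat \<Rightarrow> rat \<Rightarrow> rat" where
  "poly2 P x y = poly (poly P [:y:]) x"

lemma poly2_add [simp]: "poly2 (P + Q) x y = poly2 P x y + poly2 Q x y"
  and poly2_diff [simp]: "poly2 (P - Q) x y = poly2 P x y - poly2 Q x y"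
  and poly2_mult [simp]: "poly2 (P * Q) x y = poly2 P x y * poly2 Q x y"
  and poly2_0 [simp]: "poly2 0 x y = 0"
  and poly2_1 [simp]: "poly2 1 x y = 1"
  and poly2_cst [simp]: "poly2 (cst c) x y = c"
  and poly2_Xv [simp]: "poly2 Xv x y = x"
  and poly2_Yv [simp]: "poly2 Yv x y = y"
  by (simp_all add: poly2_def cst_def Xv_def Yv_def)

lemma poly2_sum [simp]: "poly2 (\<Sum>i\<in>A. f i) x y = (\<Sum>i\<in>A. poly2 (f i) x y)"
  by (induction A rule: infinite_finite_induct) simp_all

lemma poly2_subst [simp]: "poly2 (subst p t) x y = poly p (poly2 t x y)"
proof (induction p)
  case (pCons a p)
  have "cst 0 = 0" by (simp add: cst_def)
  then have "subst (pCons a p) t = cst a + t * subst p t"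
    by (simp add: subst_def map_poly_pCons)
  with pCons.IH show ?case by simp
qed (simp add: subst_def)

lemma poly2_galg_mult:
  "poly2 (galg_mult n A B \<sigma>) x y = galg_mult n (\<lambda>\<pi>. poly2 (A \<pi>) x y) (\<lambda>\<pi>. poly2 (B \<pi>) x y) \<sigma>"
  unfolding galg_mult_def poly2_sum by (intro sum.cong refl) simp

lemma coeff_poly_const: "coeff (poly P [:c:]) j = poly (map_poly (\<lambda>q. coeff q j) P) c"
proof (induction P)
  case (pCons a P)
  have "map_poly (\<lambda>q. coeff q j) (pCons a P) = pCons (coeff a j) (map_poly (\<lambda>q. coeff q j) P)"
    by (rule map_poly_pCons) simp
  with pCons.IH show ?case by simp
qed simp

lemma poly2_eq_0_on_grid:
  assumes "infinite A" "infinite B" and zero: "\<And>x y. x \<in> A \<Longrightarrow> y \<in> B \<Longrightarrow> poly2 P x y = 0"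
  shows "P = 0"
proof -
  have "poly P [:y:] = 0" if "y \<in> B" for y
    using zero[OF _ that] assms(1) infinite_super[of A]
    by (intro poly_eqI_infinite) (auto simp: poly2_def subset_iff)
  then have "map_poly (\<lambda>q. coeff q j) P = 0" for j
    using zero assms(2) infinite_super[of B]
    by (intro poly_eqI_infinite) (auto simp: coeff_poly_const[symmetric] subset_iff)
  then show ?thesis
    by (metis coeff_map_poly coeff_0 poly_eqI)
qed

definition specialises_to_alternating ::
    "nat \<Rightarrow> (rat poly poly \<Rightarrow> (nat \<Rightarrow> nat) \<Rightarrow> rat poly poly) \<Rightarrow> bool \<Rightarrow> bool \<Rightarrow> bool" where
  "specialises_to_alternating n S e p \<longleftrightarrow>
     (\<forall>t x y L. 2 \<le> L \<longrightarrow> even L = p \<longrightarrow> poly2 t x y = of_nat L \<longrightarrow>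
        (\<lambda>\<pi>. poly2 (S t \<pi>) x y) = count_series n (alternating_chain e L))"

lemma specialises_to_alternatingD:
  assumes "specialises_to_alternating n S e p" "2 \<le> L" "even L = p" "poly2 t x y = of_nat L"
  shows "poly2 (S t \<pi>) x y = count_series n (alternating_chain e L) \<pi>"
  using assms unfolding specialises_to_alternating_def by metis

lemma specialises_to_alternating_gen_series:
  fixes s :: "rat poly poly \<Rightarrow> rat poly poly"
  assumes Zf: "\<And>k. 1 \<le> k \<Longrightarrow> Zf k = alternating_chain e (2 * k + (if p then 0 else 1))"
    and s: "\<And>t x y. poly2 (s t) x y = (poly2 t x y - (if p then 0 else 1)) / 2"
  shows "specialises_to_alternating n (\<lambda>t. gen_series n Zf (s t)) e p"
  unfolding specialises_to_alternating_def
proof (intro allI impI ext)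
  fix t x y L \<pi> assume L: "2 \<le> L" "even L = p" and t: "poly2 t x y = of_nat L"
  define k where "k = L div 2"
  have Lk: "L = 2 * k + (if p then 0 else 1)" "1 \<le> k"
    using L by (auto simp: k_def)
  then have "poly2 (s t) x y = of_nat k"
    using s[of t x y] t by (cases p) simp_all
  moreover have "\<exists>q. \<forall>k\<ge>1. poly q (of_nat k) = (of_nat (Ncount n \<pi> (Zf k)) :: rat)"
    using Ncount_alternating_chain_polynomial[of n \<pi> e "if p then 0 else 1"] Zf by metis
  ultimately show "poly2 (gen_series n Zf (s t) \<pi>) x y = count_series n (alternating_chain e L) \<pi>"
    using poly_omega_poly[OF _ Lk(2)] Zf[OF Lk(2)] Lk(1)
    by (simp add: gen_series_def count_series_def)
qed

lemma specialises_to_alternating_rho: "specialises_to_alternating n (rho n) False True"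
  unfolding rho_def[abs_def]
  by (rule specialises_to_alternating_gen_series) (simp_all add: Z_prime_eq_alternating_chain)

lemma specialises_to_alternating_rho_bar: "specialises_to_alternating n (rho_bar n) True True"
  unfolding rho_bar_def[abs_def]
  by (rule specialises_to_alternating_gen_series) (simp_all add: Z_bar_eq_alternating_chain)

lemma specialises_to_alternating_rho_l: "specialises_to_alternating n (rho_l n) True False"
  unfolding rho_l_def[abs_def]
  by (rule specialises_to_alternating_gen_series) (simp_all add: Z_left_eq_alternating_chain)

lemma specialises_to_alternating_rho_r: "specialises_to_alternating n (rho_r n) False False"
  unfolding rho_r_def[abs_def]
  by (rule specialises_to_alternating_gen_series) (simp_all add: Z_right_eq_alternating_chain)

lemma infinite_parity_class: "infinite {of_nat L :: rat | L. 2 \<le> L \<and> even L = p}"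
proof -
  have "infinite {L :: nat. 2 \<le> L \<and> even L = p}"
    unfolding infinite_nat_iff_unbounded_le
  proof
    fix m :: nat
    show "\<exists>L\<ge>m. L \<in> {L. 2 \<le> L \<and> even L = p}"
      by (intro exI[of _ "2 * m + 2 + (if p then 0 else 1)"]) auto
  qed
  then show ?thesis
    using infinite_of_nat_image by (simp add: setcompr_eq_image)
qed

lemma galg_mult_specialises_to_alternating:
  assumes S: "specialises_to_alternating n S e\<^sub>1 p\<^sub>1"
    and T: "specialises_to_alternating n T e\<^sub>2 p\<^sub>2"
    and U: "specialises_to_alternating n U e\<^sub>3 p\<^sub>3"
    and e\<^sub>3: "e\<^sub>3 = (if p\<^sub>1 then e\<^sub>1 else e\<^sub>1 = e\<^sub>2)" and p\<^sub>3: "p\<^sub>3 = (p\<^sub>1 \<or> p\<^sub>2)"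
    and st: "(s, t) = (Xv, Yv) \<or> (s, t) = (Yv, Xv)"
  shows "galg_mult n (S s) (T t) = U (Xv * Yv)"
proof
  fix \<sigma>
  define grid where "grid p = {of_nat L :: rat | L. 2 \<le> L \<and> even L = p}" for p
  obtain A B where A: "infinite A" and B: "infinite B"
    and AB: "\<And>x y. x \<in> A \<Longrightarrow> y \<in> B \<Longrightarrow> poly2 s x y \<in> grid p\<^sub>1 \<and> poly2 t x y \<in> grid p\<^sub>2"
    using st infinite_parity_class that[of "grid p\<^sub>1" "grid p\<^sub>2"] that[of "grid p\<^sub>2" "grid p\<^sub>1"]
    by (auto simp: grid_def)
  have "poly2 (galg_mult n (S s) (T t) \<sigma> - U (Xv * Yv) \<sigma>) x y = 0" if xy: "x \<in> A" "y \<in> B" for x y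
  proof -
    obtain L\<^sub>1 L\<^sub>2 where L: "2 \<le> L\<^sub>1" "even L\<^sub>1 = p\<^sub>1" "poly2 s x y = of_nat L\<^sub>1"
      "2 \<le> L\<^sub>2" "even L\<^sub>2 = p\<^sub>2" "poly2 t x y = of_nat L\<^sub>2"
      using AB[OF xy] by (auto simp: grid_def)
    have L\<^sub>1\<^sub>2: "2 \<le> L\<^sub>1 * L\<^sub>2" "even (L\<^sub>1 * L\<^sub>2) = p\<^sub>3" "poly2 (Xv * Yv) x y = of_nat (L\<^sub>1 * L\<^sub>2)"
      using st L p\<^sub>3 by (auto intro: order.trans[OF _ mult_le_mono1[of 1 L\<^sub>1 L\<^sub>2]])
    have "alternating_chain e\<^sub>1 L\<^sub>1 \<noteq> []"
      using L(1) by (auto simp flip: length_0_conv)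
    have "poly2 (galg_mult n (S s) (T t) \<sigma>) x y = galg_mult n
        (count_series n (alternating_chain e\<^sub>1 L\<^sub>1)) (count_series n (alternating_chain e\<^sub>2 L\<^sub>2)) \<sigma>"
      using specialises_to_alternatingD[OF S L(1-3)] specialises_to_alternatingD[OF T L(4-6)]
      by (simp add: poly2_galg_mult)
    also have "\<dots> = count_series n (alternating_chain e\<^sub>3 (L\<^sub>1 * L\<^sub>2)) \<sigma>"
      by (simp add: galg_mult_count_series[OF \<open>alternating_chain e\<^sub>1 L\<^sub>1 \<noteq> []\<close>]
          chain_prod_alternating_chain e\<^sub>3 L(2))
    also have "\<dots> = poly2 (U (Xv * Yv) \<sigma>) x y"
      using specialises_to_alternatingD[OF U L\<^sub>1\<^sub>2] by simp
    finally show ?thesis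
      by simp
  qed
  then have "galg_mult n (S s) (T t) \<sigma> - U (Xv * Yv) \<sigma> = 0"
    by (rule poly2_eq_0_on_grid[OF A B])
  then show "galg_mult n (S s) (T t) \<sigma> = U (Xv * Yv) \<sigma>"
    by simp
qed

theorem theorem3p5:
  fixes n :: nat
  assumes "n \<ge> 1"
  shows "galg_mult n (rho n Xv) (rho_l n Yv) = rho n (Xv * Yv) \<and>
    galg_mult n (rho_l n Yv) (rho n Xv) = rho n (Xv * Yv) \<and>
    galg_mult n (rho_bar n Xv) (rho_l n Yv) = rho_bar n (Xv * Yv) \<and>
    galg_mult n (rho_l n Yv) (rho_bar n Xv) = rho_bar n (Xv * Yv) \<and>
    galg_mult n (rho n Xv) (rho_r n Yv) = rho n (Xv * Yv) \<and>
    galg_mult n (rho_r n Yv) (rho_bar n Xv) = rho n (Xv * Yv) \<and>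
    galg_mult n (rho_bar n Xv) (rho_r n Yv) = rho_bar n (Xv * Yv) \<and>
    galg_mult n (rho_r n Yv) (rho n Xv) = rho_bar n (Xv * Yv)"
proof -
  note mult = galg_mult_specialises_to_alternating
  note rho = specialises_to_alternating_rho and rho_bar = specialises_to_alternating_rho_bar
    and rho_l = specialises_to_alternating_rho_l and rho_r = specialises_to_alternating_rho_r
  show ?thesis
    using mult[OF rho rho_l rho, of Xv Yv] mult[OF rho_l rho rho, of Yv Xv]
      mult[OF rho_bar rho_l rho_bar, of Xv Yv] mult[OF rho_l rho_bar rho_bar, of Yv Xv]
      mult[OF rho rho_r rho, of Xv Yv] mult[OF rho_r rho_bar rho, of Yv Xv]
      mult[OF rho_bar rho_r rho_bar, of Xv Yv] mult[OF rho_r rho rho_bar, of Yv Xv]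
    by simp
qed

end
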